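(* Let $(n_i)_{i\in\mathbb{Z}}$ be any sequence of positive integers and let $A_i=\begin{pmatrix}1&0\\ n_i&1\end{pmatrix}$ for $i$ even and $A_i=\begin{pmatrix}1&n_i\\ 0&1\end{pmatrix}$ for $i$ odd, each acting on the 2-torus $M_i=\mathbb{T}^2=\mathbb{R}^2/\mathbb{Z}^2$ (with the flat metric inherited from $\mathbb{R}^2$) by multiplication on column vectors, $A_i:M_i\to M_{i+1}$. Then the family $(A_i)_{i\in\mathbb{Z}}$ is an Anosov family with constants $\lambda=\sqrt{2/3}$ and $2c$, where $c$ is the constant defined below; i.e. for all $i\in\mathbb{Z}$ and $n\ge 1$, $\|A_i^n s_i\|\le 2c\lambda^n\|s_i\|$ and $\|A_i^n u_i\|\ge (2c)^{-1}\lambda^{-n}\|u_i\|$, with stable subspaces spanned by $s_i$ and unstable subspaces spanned by $u_i$.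
   Context: For a sequence of positive integers, $[m_1m_2m_3\ldots]$ denotes the continued fraction $\frac{1}{m_1+\frac{1}{m_2+\cdots}}$. Here $A_i^n=A_{i+n-1}\cdots A_{i+1}A_i$. For each $i$, let $s_i=(a_i,b_i)$, $u_i=(c_i,d_i)$ and $\lambda_i\in(0,1)$ be given by: $a_id_i+c_ib_i=1$, and for $i$ even $a_i=[n_in_{i+1}\ldots]$, $b_i=1$, $d_i/c_i=[n_{i-1}n_{i-2}\ldots]$, $\lambda_i=a_i$; for $i$ odd $b_i=[n_in_{i+1}\ldots]$, $a_i=1$, $c_i/d_i=[n_{i-1}n_{i-2}\ldots]$, $\lambda_i=b_i$. Set $c=\max\{\sup_{i,j}\|s_i\|/\|s_j\|,\ \sup_{i,j}\|u_i\|/\|u_j\|\}$ (Euclidean norms). An Anosov family on a sequence of compact Riemannian manifolds $(M_i)$ with diffeomorphisms $f_i:M_i\to M_{i+1}$ is one for which the tangent bundle has a continuous $Df$-invariant splitting $E^s\oplus E^u$ and there are $\lambda\in(0,1)$, $c'>0$ with $\|D(f_{i+n-1}\circ\cdots\circ f_i)v\|\le c'\lambda^n\|v\|$ for $v\in E^s$ and $\|D(f_{i-n}^{-1}\circ\cdots\circ f_{i-1}^{-1})v\|\le c'\lambda^n\|v\|$ for $v\in E^u$, for all $i\in\mathbb{Z}$, $n\ge1$. *)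

theory Defs
  imports "HOL-Analysis.Analysis"
begin

text \<open>Finite truncations of the continued fraction [m_0 m_1 m_2 ...] = 1/(m_0 + 1/(m_1 + ...)).\<close>
primrec cf_fin :: "(nat \<Rightarrow> nat) \<Rightarrow> nat \<Rightarrow> real" where
  "cf_fin m 0 = 0"
| "cf_fin m (Suc k) = 1 / (real (m 0) + cf_fin (\<lambda>j. m (Suc j)) k)"

definition cf :: "(nat \<Rightarrow> nat) \<Rightarrow> real" where
  "cf m = lim (\<lambda>k. cf_fin m k)"

definition Amat :: "(int \<Rightarrow> nat) \<Rightarrow> int \<Rightarrow> real^2^2" where
  "Amat n i = (if even i then vector [vector [1, 0], vector [real (n i), 1]]
               else vector [vector [1, real (n i)], vector [0, 1]])"

primrec Apow :: "(int \<Rightarrow> nat) \<Rightarrow> int \<Rightarrow> nat \<Rightarrow> real^2^2" where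
  "Apow n i 0 = mat 1"
| "Apow n i (Suc k) = Amat n (i + int k) ** Apow n i k"

definition fwd :: "(int \<Rightarrow> nat) \<Rightarrow> int \<Rightarrow> real" where
  "fwd n i = cf (\<lambda>j. n (i + int j))"

definition bwd :: "(int \<Rightarrow> nat) \<Rightarrow> int \<Rightarrow> real" where
  "bwd n i = cf (\<lambda>j. n (i - 1 - int j))"

text \<open>Stable vector: s_i = (a_i, -b_i) (sign convention making A_i s_i parallel to s_{i+1}
  and a_i d_i + c_i b_i = det(s_i, u_i) = 1).\<close>
definition svec :: "(int \<Rightarrow> nat) \<Rightarrow> int \<Rightarrow> real^2" where
  "svec n i = (if even i then vector [fwd n i, -1] else vector [1, - fwd n i])"

text \<open>u_i = (c_i, d_i), determined by a_i d_i + c_i b_i = 1 and the ratio condition: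
  i even: d_i/c_i = bwd, so c_i = 1/(1 + a_i bwd), d_i = bwd/(1 + a_i bwd);
  i odd:  c_i/d_i = bwd, so d_i = 1/(1 + b_i bwd), c_i = bwd/(1 + b_i bwd).\<close>
definition uvec :: "(int \<Rightarrow> nat) \<Rightarrow> int \<Rightarrow> real^2" where
  "uvec n i = (if even i
     then vector [1 / (1 + fwd n i * bwd n i), bwd n i / (1 + fwd n i * bwd n i)]
     else vector [bwd n i / (1 + fwd n i * bwd n i), 1 / (1 + fwd n i * bwd n i)])"

definition cconst :: "(int \<Rightarrow> nat) \<Rightarrow> real" where
  "cconst n = max (Sup {norm (svec n i) / norm (svec n j) | i j. True})
                  (Sup {norm (uvec n i) / norm (uvec n j) | i j. True})"

end

theory Submission
  imports Defs
begin

text \<open>Writing x_i = [n_i n_{i+1} ...] and y_i = [n_{i-1} n_{i-2} ...], the recursions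
  x_i = 1/(n_i + x_{i+1}) and y_{i+1} = 1/(n_i + y_i) show that A_i maps s_i to x_i s_{i+1}
  and u_i to u_{i+1}/x_i, so A_i^k contracts s_i and expands u_i by the factor
  x_i x_{i+1} ... x_{i+k-1}. Since x_{i+1} \<le> 1 and x_i \<le> 1/(1 + x_{i+1}), two consecutive
  factors have product at most 1/2 < 2/3 = \<lambda>^2, which gives the exponential rates; the
  norms of s_i and u_i stay between 1/2 and 2, so their variation is absorbed by c.\<close>

lemma independent_of_det_eq_one:
  fixes s u :: "real^2"
  assumes det: "s $ 1 * u $ 2 - s $ 2 * u $ 1 = 1"
  shows "independent {s, u}" "s \<noteq> u"
proof -
  show "s \<noteq> u" using det by auto
  moreover have "s \<notin> span {u}"
  proof
    assume "s \<in> span {u}"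
    then obtain k where "s = k *\<^sub>R u" by (auto simp: span_singleton)
    then show False using det by (simp add: algebra_simps)
  qed
  moreover have "u \<noteq> 0" using det by auto
  ultimately show "independent {s, u}" by (simp add: independent_insert)
qed

lemma prod_le_of_consecutive_mult_le:
  fixes x :: "nat \<Rightarrow> real"
  assumes "\<And>j. 0 \<le> x j" "\<And>j. x j \<le> 1" "\<And>j. x j * x (Suc j) \<le> r ^ 2"
    and "0 \<le> r" "1 \<le> C" "1 \<le> C * r"
  shows "(\<Prod>j<k. x j) \<le> C * r ^ k"
proof (induction k rule: nat_induct2)
  case 0
  then show ?case using assms by simp
next
  case 1
  then show ?case using assms(2)[of 0] assms(6) by simp
next
  case (step k)
  have "(\<Prod>j<k + 2. x j) = (\<Prod>j<k. x j) * (x k * x (Suc k))"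
    by (simp add: numeral_2_eq_2 mult.assoc)
  also have "\<dots> \<le> (C * r ^ k) * r ^ 2"
    using step assms by (intro mult_mono) (auto intro: prod_nonneg)
  finally show ?case by (simp add: power2_eq_square ac_simps)
qed

lemma ratio_le_Sup_ratios:
  fixes f :: "'a \<Rightarrow> real"
  assumes "\<And>i. a \<le> f i" "\<And>i. f i \<le> b" "0 < a"
  shows "f i / f j \<le> Sup {f i / f j | i j. True}"
proof (rule cSup_upper)
  have "0 < b" using assms(1)[of i] assms(2)[of i] assms(3) by linarith
  then have "f i / f j \<le> b / a" for i j
    using assms by (intro frac_le) (auto intro: order_trans[OF _ assms(2)])
  then show "bdd_above {f i / f j | i j. True}" by (auto intro!: bdd_aboveI[of _ "b / a"])
qed auto

subsection \<open>Continued fractions\<close>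

lemma cf_fin_bounds:
  assumes "\<And>j. m j > 0"
  shows "0 \<le> cf_fin m k \<and> cf_fin m k \<le> 1"
  using assms
proof (induction k arbitrary: m)
  case 0
  then show ?case by simp
next
  case (Suc k)
  have "0 \<le> cf_fin (\<lambda>j. m (Suc j)) k" using Suc by auto
  moreover have "real (m 0) \<ge> 1" using Suc.prems[of 0] by simp
  ultimately show ?case by (simp add: divide_simps)
qed

lemma abs_inverse_add_diff_le:
  fixes a t s :: real
  assumes "a \<ge> 1" "0 \<le> t" "0 \<le> s"
  shows "\<bar>1 / (a + t) - 1 / (a + s)\<bar> \<le> \<bar>t - s\<bar>"
proof -
  have diff: "1 / (a + t) - 1 / (a + s) = (s - t) / ((a + t) * (a + s))"
    using assms by (simp add: field_simps)
  have "1 * 1 \<le> (a + t) * (a + s)" by (rule mult_mono) (use assms in auto)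
  then show ?thesis
    unfolding diff by (simp add: abs_div divide_le_eq abs_minus_commute mult_le_cancel_left1)
qed

lemma abs_inverse_add_inverse_add_diff_le:
  fixes a b t s :: real
  assumes "a \<ge> 1" "b \<ge> 1" "0 \<le> t" "0 \<le> s"
  shows "\<bar>1 / (a + 1 / (b + t)) - 1 / (a + 1 / (b + s))\<bar> \<le> \<bar>t - s\<bar> / 4"
proof -
  have ge1: "1 \<le> a * (b + t)" "1 \<le> a * (b + s)"
    using mult_mono[of 1 a 1 "b + t"] mult_mono[of 1 a 1 "b + s"] assms by auto
  have eq: "1 / (a + 1 / (b + r)) = (b + r) / (a * (b + r) + 1)" if "0 \<le> r" for r
    using that assms by (simp add: field_simps)
  have diff: "(b + t) / (a * (b + t) + 1) - (b + s) / (a * (b + s) + 1)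
      = (t - s) / ((a * (b + t) + 1) * (a * (b + s) + 1))"
    using ge1 by (simp add: divide_simps) (simp add: algebra_simps)
  have "2 * 2 \<le> (a * (b + t) + 1) * (a * (b + s) + 1)" by (rule mult_mono) (use ge1 in auto)
  then have "\<bar>t - s\<bar> * 4 \<le> \<bar>t - s\<bar> * ((a * (b + t) + 1) * (a * (b + s) + 1))"
    by (intro mult_left_mono) auto
  then show ?thesis
    unfolding eq[OF assms(3)] eq[OF assms(4)] diff using ge1 by (simp add: abs_div divide_simps)
qed

text \<open>A single step t \<mapsto> 1/(a + t) is only non-expanding on [0, 1]; two steps contract by 1/4.\<close>

lemma abs_cf_fin_diff_le:
  assumes "\<And>j. m j > 0"
  shows "\<bar>cf_fin m (k + j) - cf_fin m k\<bar> \<le> 2 * (1/2) ^ k"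
  using assms
proof (induction k arbitrary: m j rule: nat_induct2)
  case 0
  then show ?case using cf_fin_bounds[of m j] by auto
next
  case 1
  define t where "t = cf_fin (\<lambda>j. m (Suc j)) j"
  have "0 \<le> t" "t \<le> 1" using cf_fin_bounds[of "\<lambda>j. m (Suc j)" j] 1 by (auto simp: t_def)
  moreover have "real (m 0) \<ge> 1" using "1.prems"[of 0] by simp
  ultimately have "\<bar>1 / (real (m 0) + t) - 1 / (real (m 0) + 0)\<bar> \<le> 1"
    using abs_inverse_add_diff_le[of "real (m 0)" t 0] by simp
  then show ?case by (simp add: t_def)
next
  case (step k)
  define m2 where "m2 = (\<lambda>j. m (Suc (Suc j)))"
  have pos2: "\<And>j. m2 j > 0" using step.prems by (simp add: m2_def)
  have "real (m 0) \<ge> 1" "real (m 1) \<ge> 1" using step.prems[of 0] step.prems[of 1] by simp_all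
  moreover have "0 \<le> cf_fin m2 (k + j)" "0 \<le> cf_fin m2 k" using cf_fin_bounds[OF pos2] by auto
  ultimately have "\<bar>cf_fin m (k + 2 + j) - cf_fin m (k + 2)\<bar>
      \<le> \<bar>cf_fin m2 (k + j) - cf_fin m2 k\<bar> / 4"
    using abs_inverse_add_inverse_add_diff_le by (simp add: m2_def numeral_2_eq_2)
  also have "\<dots> \<le> 2 * (1/2) ^ k / 4" using step.IH[of m2 j, OF pos2] by simp
  finally show ?case by simp
qed

lemma cf_fin_LIMSEQ:
  assumes pos: "\<And>j. m j > 0"
  shows "(\<lambda>k. cf_fin m k) \<longlonglongrightarrow> cf m"
proof -
  have "Cauchy (\<lambda>k. cf_fin m k)"
  proof (rule metric_CauchyI)
    fix e :: real
    assume "e > 0"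
    then obtain M where M: "(1/2::real) ^ M < e / 4"
      using real_arch_pow_inv[of "e / 4" "1/2"] by auto
    have "dist (cf_fin m a) (cf_fin m b) < e" if "a \<ge> M" "b \<ge> M" for a b
      using abs_cf_fin_diff_le[of m M "a - M", OF pos] abs_cf_fin_diff_le[of m M "b - M", OF pos]
        that M by (simp add: dist_real_def)
    then show "\<exists>M. \<forall>a\<ge>M. \<forall>b\<ge>M. dist (cf_fin m a) (cf_fin m b) < e" by blast
  qed
  then show ?thesis unfolding cf_def by (simp add: Cauchy_convergent_iff convergent_LIMSEQ_iff)
qed

lemma cf_bounds:
  assumes pos: "\<And>j. m j > 0"
  shows "0 \<le> cf m" "cf m \<le> 1"
  using LIMSEQ_le_const[OF cf_fin_LIMSEQ[OF pos]] LIMSEQ_le_const2[OF cf_fin_LIMSEQ[OF pos]]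
    cf_fin_bounds[OF pos] by auto

lemma cf_eq:
  assumes pos: "\<And>j. m j > 0"
  shows "cf m = 1 / (real (m 0) + cf (\<lambda>j. m (Suc j)))"
proof -
  have "0 \<le> cf (\<lambda>j. m (Suc j))" by (rule cf_bounds(1)) (simp add: pos)
  then have "real (m 0) + cf (\<lambda>j. m (Suc j)) \<noteq> 0" using pos[of 0] by linarith
  then have "(\<lambda>k. cf_fin m (Suc k)) \<longlonglongrightarrow> 1 / (real (m 0) + cf (\<lambda>j. m (Suc j)))"
    by (auto intro!: tendsto_intros cf_fin_LIMSEQ[of "\<lambda>j. m (Suc j)"] pos)
  then show ?thesis using LIMSEQ_unique[OF LIMSEQ_Suc[OF cf_fin_LIMSEQ[OF pos]]] by simp
qed

subsection \<open>Stable and unstable directions\<close>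

context
  fixes n :: "int \<Rightarrow> nat"
  assumes pos: "\<And>i. n i > 0"
begin

lemma fwd_eq:
  "fwd n i = 1 / (real (n i) + fwd n (i + 1))"
  using cf_eq[of "\<lambda>j. n (i + int j)"] pos by (simp add: fwd_def add.assoc)

lemma bwd_add_one_eq:
  "bwd n (i + 1) = 1 / (real (n i) + bwd n i)"
  using cf_eq[of "\<lambda>j. n (i - int j)"] pos by (simp add: bwd_def algebra_simps)

lemma fwd_bounds:
  "0 < fwd n i" "fwd n i \<le> 1"
proof -
  show "fwd n i \<le> 1" unfolding fwd_def by (rule cf_bounds(2)) (simp add: pos)
  have "fwd n (i + 1) \<ge> 0" unfolding fwd_def by (rule cf_bounds(1)) (simp add: pos)
  then show "0 < fwd n i" using fwd_eq[of i] pos[of i] by simp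
qed

lemma bwd_bounds:
  "0 < bwd n i" "bwd n i \<le> 1"
proof -
  show "bwd n i \<le> 1" unfolding bwd_def by (rule cf_bounds(2)) (simp add: pos)
  have "bwd n (i - 1) \<ge> 0" unfolding bwd_def by (rule cf_bounds(1)) (simp add: pos)
  then show "0 < bwd n i" using bwd_add_one_eq[of "i - 1"] pos[of "i - 1"] by simp
qed

lemma fwd_mult_fwd_le_half:
  "fwd n i * fwd n (i + 1) \<le> 1/2"
proof -
  define x x' where "x = fwd n i" and "x' = fwd n (i + 1)"
  have "0 < x" "0 < x'" "x' \<le> 1" using fwd_bounds by (auto simp: x_def x'_def)
  moreover have "x * (real (n i) + x') = 1"
    using fwd_eq[of i] fwd_bounds(1)[of "i + 1"] pos[of i]
    by (simp add: x_def x'_def)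
  moreover have "x \<le> x * real (n i)" using pos[of i] \<open>0 < x\<close> by simp
  ultimately have "x * x' \<le> 1 - x" "x * x' \<le> x"
    by (simp_all only: distrib_left mult_left_le)
  then show ?thesis by (simp add: x_def x'_def)
qed

lemma Amat_mult_vector:
  "Amat n i *v vector [a, b] =
     (if even i then vector [a, real (n i) * a + b] else vector [a + real (n i) * b, b])"
  by (auto simp: vec_eq_iff forall_2 matrix_vector_mult_def sum_2 Amat_def)

lemma Amat_svec:
  "Amat n i *v svec n i = fwd n i *\<^sub>R svec n (i + 1)"
proof -
  have "fwd n i * (real (n i) + fwd n (i + 1)) = 1"
    using fwd_eq[of i] fwd_bounds(1)[of "i + 1"] pos[of i] by simp
  then show ?thesis
    by (auto simp: svec_def Amat_mult_vector vec_eq_iff forall_2 algebra_simps)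
qed

text \<open>With x' = 1/x - N and y' = 1/(N + y), the normalising denominators
  D = 1 + x y and D' = 1 + x' y' of u_i and u_{i+1} satisfy x D' = y' D.\<close>

lemma Amat_uvec:
  "Amat n i *v uvec n i = (1 / fwd n i) *\<^sub>R uvec n (i + 1)"
proof -
  define N x x' y y' where "N = real (n i)" and "x = fwd n i" and "x' = fwd n (i + 1)"
    and "y = bwd n i" and "y' = bwd n (i + 1)"
  have x: "0 < x" "0 < x'" using fwd_bounds(1) by (auto simp: x_def x'_def)
  have y: "0 < y" "0 < y'" using bwd_bounds(1) by (auto simp: y_def y'_def)
  have N: "N \<ge> 1" using pos[of i] by (simp add: N_def)
  have hx: "x * (N + x') = 1"
    using fwd_eq[of i] x N by (simp add: x_def x'_def N_def)
  have hy: "y' * (N + y) = 1"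
    using bwd_add_one_eq[of i] y N by (simp add: y_def y'_def N_def)
  have D: "x * (1 + x' * y') = y' * (1 + x * y)"
    using hx hy by algebra
  have "1 / x * (y' / (1 + x' * y')) = y' / (y' * (1 + x * y))"
    and "1 / x * (1 / (1 + x' * y')) = 1 / (y' * (1 + x * y))"
    by (simp_all flip: D)
  moreover have "N + y = 1 / y'" using hy y by (simp add: field_simps)
  ultimately have "1 / x * (y' / (1 + x' * y')) = 1 / (1 + x * y)"
    and "1 / x * (1 / (1 + x' * y')) = (N + y) / (1 + x * y)"
    using y by simp_all
  then show ?thesis
    by (auto simp: uvec_def Amat_mult_vector vec_eq_iff forall_2 add_divide_distrib ac_simps
        N_def x_def x'_def y_def y'_def)
qed

lemma det_svec_uvec:
  "svec n i $ 1 * uvec n i $ 2 - svec n i $ 2 * uvec n i $ 1 = 1"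
proof -
  have "1 + fwd n i * bwd n i > 0"
    using fwd_bounds(1) bwd_bounds(1) by (simp add: add_pos_pos)
  then show ?thesis by (simp add: svec_def uvec_def field_simps)
qed

lemma Apow_svec:
  "Apow n i k *v svec n i = (\<Prod>j<k. fwd n (i + int j)) *\<^sub>R svec n (i + int k)"
proof (induction k)
  case 0
  then show ?case by simp
next
  case (Suc k)
  have "Apow n i (Suc k) *v svec n i = Amat n (i + int k) *v (Apow n i k *v svec n i)"
    by (simp add: matrix_vector_mul_assoc)
  also have "\<dots> = (\<Prod>j<Suc k. fwd n (i + int j)) *\<^sub>R svec n (i + int (Suc k))"
    by (simp add: Suc.IH matrix_vector_mult_scaleR Amat_svec ac_simps)
  finally show ?case .
qed

lemma Apow_uvec:
  "Apow n i k *v uvec n i = (1 / (\<Prod>j<k. fwd n (i + int j))) *\<^sub>R uvec n (i + int k)"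
proof (induction k)
  case 0
  then show ?case by simp
next
  case (Suc k)
  have "Apow n i (Suc k) *v uvec n i = Amat n (i + int k) *v (Apow n i k *v uvec n i)"
    by (simp add: matrix_vector_mul_assoc)
  also have "\<dots> = (1 / (\<Prod>j<Suc k. fwd n (i + int j))) *\<^sub>R uvec n (i + int (Suc k))"
    by (simp add: Suc.IH matrix_vector_mult_scaleR Amat_uvec ac_simps)
  finally show ?case .
qed

lemma prod_fwd_le:
  "(\<Prod>j<k. fwd n (i + int j)) \<le> 2 * sqrt (2/3) ^ k"
proof (rule prod_le_of_consecutive_mult_le)
  show "fwd n (i + int j) * fwd n (i + int (Suc j)) \<le> sqrt (2/3) ^ 2" for j
    using fwd_mult_fwd_le_half[of "i + int j"] by (simp add: add_ac)
  have "1/2 \<le> sqrt (2/3::real)" by (rule real_le_rsqrt) (simp add: power2_eq_square)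
  then show "1 \<le> 2 * sqrt (2/3::real)" by linarith
qed (use fwd_bounds less_imp_le in auto)

lemma norm_svec_bounds:
  "1 \<le> norm (svec n i)" "norm (svec n i) \<le> 2"
proof -
  have "0 < fwd n i" "fwd n i \<le> 1" using fwd_bounds by auto
  then have "\<bar>svec n i $ 1\<bar> \<le> 1" "\<bar>svec n i $ 2\<bar> \<le> 1" by (auto simp: svec_def)
  then show "norm (svec n i) \<le> 2" using norm_le_l1_cart[of "svec n i"] by (simp add: sum_2)
  have "\<bar>svec n i $ 1\<bar> = 1 \<or> \<bar>svec n i $ 2\<bar> = 1" by (auto simp: svec_def)
  then show "1 \<le> norm (svec n i)"
    using component_le_norm_cart[of "svec n i" 1] component_le_norm_cart[of "svec n i" 2] by auto
qed

lemma norm_uvec_bounds: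
  "1/2 \<le> norm (uvec n i)" "norm (uvec n i) \<le> 2"
proof -
  define D where "D = 1 + fwd n i * bwd n i"
  define p q where "p = 1 / D" and "q = bwd n i / D"
  have "0 < bwd n i" "bwd n i \<le> 1" using bwd_bounds by auto
  moreover have "1 \<le> D" "D \<le> 2"
    using fwd_bounds[of i] bwd_bounds[of i]
      mult_mono[of "fwd n i" 1 "bwd n i" 1] by (auto simp: D_def)
  ultimately have "1/2 \<le> p" "p \<le> 1" "0 \<le> q" "q \<le> 1"
    by (auto simp: p_def q_def divide_simps)
  moreover have "uvec n i $ 1 = p \<and> uvec n i $ 2 = q \<or> uvec n i $ 1 = q \<and> uvec n i $ 2 = p"
    by (simp add: uvec_def D_def p_def q_def)
  ultimately have "\<bar>uvec n i $ 1\<bar> \<le> 1" "\<bar>uvec n i $ 2\<bar> \<le> 1"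
    and "1/2 \<le> \<bar>uvec n i $ 1\<bar> \<or> 1/2 \<le> \<bar>uvec n i $ 2\<bar>"
    by (elim disjE conjE; simp)+
  then show "norm (uvec n i) \<le> 2" "1/2 \<le> norm (uvec n i)"
    using norm_le_l1_cart[of "uvec n i"] component_le_norm_cart[of "uvec n i" 1]
      component_le_norm_cart[of "uvec n i" 2] by (auto simp: sum_2)
qed

lemma norm_svec_le_cconst:
  "norm (svec n i) \<le> cconst n * norm (svec n j)"
proof -
  have "norm (svec n i) / norm (svec n j) \<le> cconst n"
    using ratio_le_Sup_ratios[where f = "\<lambda>i. norm (svec n i)", OF norm_svec_bounds]
    unfolding cconst_def by (auto intro: max.coboundedI1)
  moreover have "0 < norm (svec n j)" using norm_svec_bounds(1)[of j] by linarith
  ultimately show ?thesis by (simp add: pos_divide_le_eq)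
qed

lemma norm_uvec_le_cconst:
  "norm (uvec n i) \<le> cconst n * norm (uvec n j)"
proof -
  have "norm (uvec n i) / norm (uvec n j) \<le> cconst n"
    using ratio_le_Sup_ratios[where f = "\<lambda>i. norm (uvec n i)", OF norm_uvec_bounds]
    unfolding cconst_def by (auto intro: max.coboundedI2)
  moreover have "0 < norm (uvec n j)" using norm_uvec_bounds(1)[of j] by linarith
  ultimately show ?thesis by (simp add: pos_divide_le_eq)
qed

lemma cconst_ge_one:
  "1 \<le> cconst n"
proof -
  have "0 < norm (svec n 0)" using norm_svec_bounds(1)[of 0] by linarith
  then show ?thesis using norm_svec_le_cconst[of 0 0] by (simp add: mult_le_cancel_right1)
qed

lemma norm_Apow_svec_le:
  "norm (Apow n i k *v svec n i) \<le> 2 * cconst n * sqrt (2/3) ^ k * norm (svec n i)"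
proof -
  have "norm (Apow n i k *v svec n i) = (\<Prod>j<k. fwd n (i + int j)) * norm (svec n (i + int k))"
    using fwd_bounds(1) by (simp add: Apow_svec prod_nonneg less_imp_le)
  also have "\<dots> \<le> (2 * sqrt (2/3) ^ k) * (cconst n * norm (svec n i))"
    by (intro mult_mono prod_fwd_le norm_svec_le_cconst) (simp_all add: pos)
  finally show ?thesis by (simp add: ac_simps)
qed

lemma norm_Apow_uvec_ge:
  "inverse (2 * cconst n) * (1 / sqrt (2/3)) ^ k * norm (uvec n i)
    \<le> norm (Apow n i k *v uvec n i)"
proof -
  define P where "P = (\<Prod>j<k. fwd n (i + int j))"
  have "0 < P" using fwd_bounds(1) by (simp add: P_def prod_pos)
  have c: "1 \<le> cconst n" by (rule cconst_ge_one)
  have "inverse (2 * cconst n) * (1 / sqrt (2/3)) ^ k * norm (uvec n i)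
      = (1 / (2 * sqrt (2/3) ^ k)) * (norm (uvec n i) / cconst n)"
    using c by (simp add: power_one_over field_simps)
  also have "\<dots> \<le> (1 / P) * norm (uvec n (i + int k))"
  proof (rule mult_mono)
    show "1 / (2 * sqrt (2/3) ^ k) \<le> 1 / P"
      using \<open>0 < P\<close> prod_fwd_le by (intro frac_le) (auto simp: P_def)
    show "norm (uvec n i) / cconst n \<le> norm (uvec n (i + int k))"
      using norm_uvec_le_cconst[of i "i + int k"] c by (simp add: divide_le_eq ac_simps)
  qed (use \<open>0 < P\<close> c in auto)
  also have "\<dots> = norm (Apow n i k *v uvec n i)"
    using \<open>0 < P\<close> by (simp add: Apow_uvec P_def)
  finally show ?thesis .
qed

end

theorem proposition3p5:
  fixes n :: "int \<Rightarrow> nat"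
  assumes pos: "\<And>i. n i > 0"
  defines "lam \<equiv> sqrt (2/3)"
  shows "(\<forall>i. (\<exists>t. Amat n i *v svec n i = t *\<^sub>R svec n (i + 1))
            \<and> (\<exists>t. Amat n i *v uvec n i = t *\<^sub>R uvec n (i + 1))
            \<and> independent {svec n i, uvec n i} \<and> svec n i \<noteq> uvec n i)
       \<and> (\<forall>i. \<forall>k::nat. k \<ge> 1 \<longrightarrow>
            norm (Apow n i k *v svec n i) \<le> 2 * cconst n * lam ^ k * norm (svec n i)
          \<and> norm (Apow n i k *v uvec n i) \<ge> inverse (2 * cconst n) * (1 / lam) ^ k * norm (uvec n i))"
  using Amat_svec[of n, OF pos] Amat_uvec[of n, OF pos]
    independent_of_det_eq_one[OF det_svec_uvec[of n, OF pos]]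
    norm_Apow_svec_le[of n, OF pos] norm_Apow_uvec_ge[of n, OF pos]
  unfolding lam_def by blast

end
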